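(* For every simple, undirected, connected graph $\Gamma$ with at least two vertices, there exists a triple Roman dominating function of $\Gamma$ of minimum weight $\gamma_{[3R]}(\Gamma)$ that assigns the value $1$ to no vertex.
   Context: For a graph $\Gamma=(V,E)$ and $h:V\to\{0,1,2,3,4\}$, let $AN(v)=\{w\in N(v):h(w)\ge 1\}$, $AN[v]=AN(v)\cup\{v\}$ and $h(S)=\sum_{u\in S}h(u)$. $h$ is a triple Roman dominating function (3RDF) if every $v$ with $h(v)<3$ satisfies $h(AN[v])\ge|AN(v)|+3$. The triple Roman domination number $\gamma_{[3R]}(\Gamma)$ is the minimum weight $h(V)$ of a 3RDF of $\Gamma$. *)

theory Defs
  imports Main
begin

definition simple_graph :: "'a set \<Rightarrow> ('a \<Rightarrow> 'a \<Rightarrow> bool) \<Rightarrow> bool" where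
  "simple_graph V E \<longleftrightarrow> finite V \<and> (\<forall>u v. E u v \<longrightarrow> u \<in> V \<and> v \<in> V)
     \<and> (\<forall>u v. E u v \<longrightarrow> E v u) \<and> (\<forall>v. \<not> E v v)"

definition connected_graph :: "'a set \<Rightarrow> ('a \<Rightarrow> 'a \<Rightarrow> bool) \<Rightarrow> bool" where
  "connected_graph V E \<longleftrightarrow> (\<forall>u\<in>V. \<forall>v\<in>V. (u, v) \<in> {(x, y). E x y}\<^sup>*)"

definition nbhd :: "('a \<Rightarrow> 'a \<Rightarrow> bool) \<Rightarrow> 'a \<Rightarrow> 'a set" where
  "nbhd E v = {w. E v w}"

definition AN :: "('a \<Rightarrow> 'a \<Rightarrow> bool) \<Rightarrow> ('a \<Rightarrow> nat) \<Rightarrow> 'a \<Rightarrow> 'a set" where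
  "AN E h v = {w \<in> nbhd E v. h w \<ge> 1}"

definition weight :: "'a set \<Rightarrow> ('a \<Rightarrow> nat) \<Rightarrow> nat" where
  "weight S h = (\<Sum>u\<in>S. h u)"

text \<open>Triple Roman dominating function h : V \<rightarrow> {0,...,4}. Values outside V are
  irrelevant; we require h to be 0 outside V so that functions correspond to maps on V.\<close>
definition is_3RDF :: "'a set \<Rightarrow> ('a \<Rightarrow> 'a \<Rightarrow> bool) \<Rightarrow> ('a \<Rightarrow> nat) \<Rightarrow> bool" where
  "is_3RDF V E h \<longleftrightarrow> (\<forall>v\<in>V. h v \<le> 4) \<and> (\<forall>v. v \<notin> V \<longrightarrow> h v = 0)
     \<and> (\<forall>v\<in>V. h v < 3 \<longrightarrow> weight (insert v (AN E h v)) h \<ge> card (AN E h v) + 3)"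

definition gamma_3R :: "'a set \<Rightarrow> ('a \<Rightarrow> 'a \<Rightarrow> bool) \<Rightarrow> nat" where
  "gamma_3R V E = Min {weight V h | h. is_3RDF V E h}"

end

theory Submission
  imports Defs
begin

text \<open>The domination condition at \<open>v\<close> is equivalent to \<open>h(v) + \<Sum>(h(w) - 1) \<ge> 3\<close>, the sum
  over all neighbours \<open>w\<close> of \<open>v\<close> with truncated subtraction. So a vertex \<open>v\<close> with \<open>h(v) = 1\<close>
  has a neighbour \<open>w\<close> with \<open>h(w) \<ge> 2\<close>. Setting \<open>h(v) := 0\<close> and raising \<open>h(w)\<close> by one
  (capped at 4) does not increase the weight, keeps every other vertex dominated (their sums
  only grow, since a vertex of value 1 contributes nothing to them) and dominates \<open>v\<close> through
  \<open>w\<close>. Repeating this on a minimum 3RDF removes all values 1.\<close>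

definition excess :: "('a \<Rightarrow> 'a \<Rightarrow> bool) \<Rightarrow> ('a \<Rightarrow> nat) \<Rightarrow> 'a \<Rightarrow> nat" where
  "excess E h u = h u + (\<Sum>x\<in>nbhd E u. h x - 1)"

lemma weight_closed_AN_iff_excess:
  assumes fin: "finite (nbhd E u)" and irrefl: "\<not> E u u"
  shows "card (AN E h u) + 3 \<le> weight (insert u (AN E h u)) h \<longleftrightarrow> 3 \<le> excess E h u"
proof -
  let ?A = "AN E h u"
  have sub: "?A \<subseteq> nbhd E u" unfolding AN_def by auto
  have finA: "finite ?A" using fin sub finite_subset by blast
  have "u \<notin> ?A" using irrefl unfolding AN_def nbhd_def by auto
  then have "weight (insert u ?A) h = h u + sum h ?A"
    unfolding weight_def using finA by simp
  also have "sum h ?A = (\<Sum>x\<in>?A. (h x - 1) + 1)"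
    by (rule sum.cong) (auto simp: AN_def)
  also have "\<dots> = (\<Sum>x\<in>?A. h x - 1) + card ?A"
    by (simp only: sum.distrib card_eq_sum)
  also have "(\<Sum>x\<in>?A. h x - 1) = (\<Sum>x\<in>nbhd E u. h x - 1)"
    by (rule sum.mono_neutral_left[OF fin sub]) (auto simp: AN_def nbhd_def)
  finally show ?thesis unfolding excess_def by linarith
qed

lemma simple_graph_finite_nbhd:
  "simple_graph V E \<Longrightarrow> finite (nbhd E u)"
  unfolding simple_graph_def nbhd_def by (metis (no_types, lifting) finite_subset mem_Collect_eq subsetI)

lemma is_3RDF_iff_excess:
  assumes "simple_graph V E"
  shows "is_3RDF V E h \<longleftrightarrow> (\<forall>v\<in>V. h v \<le> 4) \<and> (\<forall>v. v \<notin> V \<longrightarrow> h v = 0)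
           \<and> (\<forall>v\<in>V. h v < 3 \<longrightarrow> 3 \<le> excess E h v)"
  using weight_closed_AN_iff_excess[OF simple_graph_finite_nbhd[OF assms]] assms
  unfolding is_3RDF_def simple_graph_def by auto

lemma excess_mono:
  assumes "\<And>x. h x \<le> g x"
  shows "excess E h u \<le> excess E g u"
  unfolding excess_def using assms by (intro add_mono sum_mono diff_le_mono) auto

lemma excess_fun_upd_zero:
  assumes "h v \<le> 1" and "u \<noteq> v"
  shows "excess E (h(v := 0)) u = excess E h u"
  unfolding excess_def using assms by (auto intro!: sum.cong)

lemma is_3RDF_raise_off_vertex:
  assumes graph: "simple_graph V E" and h: "is_3RDF V E h" and hv: "h v \<le> 1"
    and raise: "\<And>x. (h(v := 0)) x \<le> g x"
    and g4: "\<forall>x\<in>V. g x \<le> 4" and g0: "\<forall>x. x \<notin> V \<longrightarrow> g x = 0"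
    and gv: "3 \<le> excess E g v"
  shows "is_3RDF V E g"
proof -
  have "3 \<le> excess E g u" if u: "u \<in> V" "g u < 3" for u
  proof (cases "u = v")
    case True
    with gv show ?thesis by simp
  next
    case False
    with raise[of u] u have "h u < 3" by simp
    with h u have "3 \<le> excess E h u" by (simp add: is_3RDF_iff_excess[OF graph])
    also have "\<dots> = excess E (h(v := 0)) u" using excess_fun_upd_zero[of h v u] hv False by simp
    also have "\<dots> \<le> excess E g u" using raise by (rule excess_mono)
    finally show ?thesis .
  qed
  with g4 g0 show ?thesis by (simp add: is_3RDF_iff_excess[OF graph])
qed

lemma is_3RDF_one_has_big_neighbour:
  assumes graph: "simple_graph V E" and h: "is_3RDF V E h" and v: "v \<in> V" "h v = 1"
  obtains w where "E v w" and "2 \<le> h w"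
proof -
  from h v have "3 \<le> excess E h v" by (simp add: is_3RDF_iff_excess[OF graph])
  with v have "(\<Sum>x\<in>nbhd E v. h x - 1) \<noteq> 0" by (simp add: excess_def)
  then obtain w where "w \<in> nbhd E v" "h w - 1 \<noteq> 0" by (meson sum.neutral)
  with that show ?thesis by (simp add: nbhd_def)
qed

lemma is_3RDF_shift_one:
  assumes graph: "simple_graph V E" and h: "is_3RDF V E h" and v: "v \<in> V" "h v = 1"
    and w: "E v w" "2 \<le> h w"
  shows "is_3RDF V E (h(v := 0, w := min 4 (h w + 1)))" (is "is_3RDF V E ?g")
proof (rule is_3RDF_raise_off_vertex[OF graph h])
  have fin: "finite (nbhd E v)" using graph by (rule simple_graph_finite_nbhd)
  have wV: "w \<in> V" and irrefl: "\<not> E v v" and h4: "h w \<le> 4"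
    using graph h w unfolding simple_graph_def is_3RDF_def by auto
  have wN: "w \<in> nbhd E v" and vN: "v \<notin> nbhd E v" and vw: "v \<noteq> w"
    using w irrefl by (auto simp: nbhd_def)
  let ?R = "\<Sum>x\<in>nbhd E v - {w}. h x - 1"
  have "3 \<le> excess E h v" using h v by (simp add: is_3RDF_iff_excess[OF graph])
  also have "excess E h v = 1 + (h w - 1) + ?R"
    unfolding excess_def using v fin wN by (simp add: sum.remove)
  finally have "3 \<le> min 3 (h w) + ?R" using h4 w(2) by (simp split: split_min)
  also have "?R = (\<Sum>x\<in>nbhd E v - {w}. ?g x - 1)"
    using vN by (intro sum.cong) auto
  also have "min 3 (h w) + \<dots> = excess E ?g v"
    unfolding excess_def using vw fin wN by (simp add: sum.remove)
  finally show "3 \<le> excess E ?g v" .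
  show "\<forall>x\<in>V. ?g x \<le> 4" "\<forall>x. x \<notin> V \<longrightarrow> ?g x = 0"
    using h v wV unfolding is_3RDF_def by auto
  show "h v \<le> 1" "\<And>x. (h(v := 0)) x \<le> ?g x" using v h4 by auto
qed

lemma weight_fun_upd:
  assumes "finite V" and "x \<in> V"
  shows "weight V (h(x := c)) + h x = weight V h + c"
  using assms by (simp add: weight_def sum.remove)

lemma exists_3RDF_fewer_ones:
  assumes graph: "simple_graph V E" and h: "is_3RDF V E h" and v: "v \<in> V" "h v = 1"
  obtains g where "is_3RDF V E g" and "weight V g \<le> weight V h"
    and "{x\<in>V. g x = 1} \<subset> {x\<in>V. h x = 1}"
proof -
  obtain w where w: "E v w" "2 \<le> h w"
    using is_3RDF_one_has_big_neighbour[OF graph h v] .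
  define g where "g = h(v := 0, w := min 4 (h w + 1))"
  have finV: "finite V" and wV: "w \<in> V" and vw: "v \<noteq> w"
    using graph w unfolding simple_graph_def by auto
  have "weight V g + h w + h v = weight V h + min 4 (h w + 1)"
    using weight_fun_upd[OF finV wV, of "h(v := 0)"] weight_fun_upd[OF finV v(1), of h] vw
    by (simp add: g_def)
  then have "weight V g \<le> weight V h" using v by linarith
  moreover have "{x\<in>V. g x = 1} \<subset> {x\<in>V. h x = 1}"
    using v w(2) vw by (auto simp: g_def)
  ultimately show ?thesis
    using that is_3RDF_shift_one[OF graph h v w] unfolding g_def by blast
qed

lemma exists_3RDF_without_ones:
  assumes graph: "simple_graph V E" and h: "is_3RDF V E h"
  shows "\<exists>g. is_3RDF V E g \<and> weight V g \<le> weight V h \<and> (\<forall>v\<in>V. g v \<noteq> 1)"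
  using h
proof (induction "card {x\<in>V. h x = 1}" arbitrary: h rule: less_induct)
  case less
  show ?case
  proof (cases "\<forall>v\<in>V. h v \<noteq> 1")
    case True
    with less.prems show ?thesis by blast
  next
    case False
    then obtain v where "v \<in> V" "h v = 1" by blast
    then obtain g where g: "is_3RDF V E g" "weight V g \<le> weight V h"
      and fewer: "{x\<in>V. g x = 1} \<subset> {x\<in>V. h x = 1}"
      using exists_3RDF_fewer_ones[OF graph less.prems] by blast
    have "finite {x\<in>V. h x = 1}" using graph by (simp add: simple_graph_def)
    with fewer have "card {x\<in>V. g x = 1} < card {x\<in>V. h x = 1}"
      by (rule psubset_card_mono[rotated])
    with less.hyps g(1) obtain g' where
      "is_3RDF V E g'" "weight V g' \<le> weight V g" "\<forall>v\<in>V. g' v \<noteq> 1"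
      by blast
    with g(2) show ?thesis by (meson order_trans)
  qed
qed

lemma finite_3RDF_weights:
  assumes "finite V"
  shows "finite {weight V h | h. is_3RDF V E h}"
proof (rule finite_subset)
  show "{weight V h | h. is_3RDF V E h} \<subseteq> {..4 * card V}"
  proof
    fix n assume "n \<in> {weight V h | h. is_3RDF V E h}"
    then obtain h where h: "is_3RDF V E h" and n: "n = weight V h" by blast
    from h have "weight V h \<le> (\<Sum>u\<in>V. 4)"
      unfolding weight_def is_3RDF_def by (intro sum_mono) auto
    with n show "n \<in> {..4 * card V}" by simp
  qed
qed simp

lemma gamma_3R_le:
  "finite V \<Longrightarrow> is_3RDF V E h \<Longrightarrow> gamma_3R V E \<le> weight V h"
  unfolding gamma_3R_def by (rule Min_le[OF finite_3RDF_weights]) blast+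

lemma gamma_3R_attained:
  assumes "finite V"
  obtains h where "is_3RDF V E h" and "weight V h = gamma_3R V E"
proof -
  have "is_3RDF V E (\<lambda>x. if x \<in> V then 3 else 0)" unfolding is_3RDF_def by auto
  then have "{weight V h | h. is_3RDF V E h} \<noteq> {}" by blast
  from Min_in[OF finite_3RDF_weights[OF assms] this] that show ?thesis
    unfolding gamma_3R_def by auto
qed

theorem proposition17:
  fixes V :: "'a set" and E :: "'a \<Rightarrow> 'a \<Rightarrow> bool"
  assumes "simple_graph V E" and "connected_graph V E" and "card V \<ge> 2"
  shows "\<exists>h. is_3RDF V E h \<and> weight V h = gamma_3R V E \<and> (\<forall>v\<in>V. h v \<noteq> 1)"
proof -
  have finV: "finite V" using assms(1) by (simp add: simple_graph_def)
  obtain h where h: "is_3RDF V E h" "weight V h = gamma_3R V E"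
    using gamma_3R_attained[OF finV] .
  obtain g where g: "is_3RDF V E g" "weight V g \<le> weight V h" "\<forall>v\<in>V. g v \<noteq> 1"
    using exists_3RDF_without_ones[OF assms(1) h(1)] by blast
  have "gamma_3R V E \<le> weight V g" using finV g(1) by (rule gamma_3R_le)
  with g h show ?thesis by auto
qed

end
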